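(* Let $S$ be a primitive substitution over a finite alphabet $\mathcal{A}$ with linear repetitivity constant $C_S$ and Perron–Frobenius eigenvalue $\theta_S$, let $r\in\mathbb{N}$ and $\omega_0\in\mathcal{A}^{\mathbb{Z}}$. (1) If $n\ge N_1(r):=\frac{\log r}{\log\theta_S}+\frac{\log C_S-\log\check C(S)}{\log\theta_S}$, then $W(\Omega_n(\omega_0))_r\supseteq W(S)_r$. (2) If $\omega_0$ is a good approximant and $n>N_2(r):=\frac{\log r}{\log\theta_S}-\frac{\log(2\check C(S))}{\log\theta_S}+|\mathcal{A}|^2$, then $W(\Omega_n(\omega_0))_r\subseteq W(S)_r$.
   Context: Words are finite strings over $\mathcal{A}$; $u\prec w$ means contiguous subword; $|u|$ is length. A substitution $S:\mathcal{A}\to\mathcal{A}^+$ extends to words and configurations $\omega:\mathbb{Z}\to\mathcal{A}$ by concatenation (with $S(\omega(0))$ starting at $0$); it is primitive if for some $p$, every letter occurs in $S^p(a)$ for every $a$. $\theta_S$ is the Perron–Frobenius eigenvalue of the substitution matrix (entry $(i,j)$ = number of occurrences of $a_i$ in $S(a_j)$). $\check C(S),\hat C(S)>0$ are fixed constants with $\check C(S)\theta_S^n\le|S^n(a)|\le\hat C(S)\theta_S^n$ for all $a\in\mathcal{A}$, $n\in\mathbb{N}$. Legal words $W(S)$: subwords of some $S^n(a)$. $C_S\ge1$ is a linear repetitivity constant: for all $u,w\in W(S)$ with $|w|\ge C_S|u|$, $u\prec w$. For a subshift $\Omega$, $W(\Omega)$ is the set of finite subwords of its elements and $W(\cdot)_r$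 the subset of length-$r$ words. $\Omega_n(\omega_0)$ is the closure of the shift-orbit of $S^n(\omega_0)$. $G(S)$ is the directed graph on $\mathcal{A}^2$ with edge $u\to w$ iff $u,w\notin W(S)$ and $w\prec S(u)$; $\omega_0$ is a good approximant if every directed path in $G(S)$ starting at a length-$2$ subword of $\omega_0$ contains no closed subpath. *)

theory Defs
  imports Complex_Main "HOL-Library.Sublist"
begin

text \<open>Words are lists over an alphabet of finite type 'a; a substitution is
  S :: 'a \<Rightarrow> 'a list with nonempty images. Contiguous subword is sublist.\<close>

definition nonerasing :: "('a \<Rightarrow> 'a list) \<Rightarrow> bool" where
  "nonerasing S \<longleftrightarrow> (\<forall>a. S a \<noteq> [])"

definition subst_word :: "('a \<Rightarrow> 'a list) \<Rightarrow> 'a list \<Rightarrow> 'a list" where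
  "subst_word S w = concat (map S w)"

definition primitive_subst :: "('a \<Rightarrow> 'a list) \<Rightarrow> bool" where
  "primitive_subst S \<longleftrightarrow> (\<exists>p. \<forall>a b. b \<in> set ((subst_word S ^^ p) [a]))"

definition subst_matrix :: "('a \<Rightarrow> 'a list) \<Rightarrow> 'a \<Rightarrow> 'a \<Rightarrow> nat" where
  "subst_matrix S i j = count_list (S j) i"

definition pf_eigenvalue :: "('a::finite \<Rightarrow> 'a list) \<Rightarrow> real \<Rightarrow> bool" where
  "pf_eigenvalue S \<theta> \<longleftrightarrow>
     (\<exists>v::'a \<Rightarrow> real. v \<noteq> (\<lambda>_. 0) \<and>
        (\<forall>i. (\<Sum>j\<in>UNIV. real (subst_matrix S i j) * v j) = \<theta> * v i)) \<and>
     (\<forall>(\<mu>::complex) (w::'a \<Rightarrow> complex). w \<noteq> (\<lambda>_. 0) \<and>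
        (\<forall>i. (\<Sum>j\<in>UNIV. of_nat (subst_matrix S i j) * w j) = \<mu> * w i) \<longrightarrow> cmod \<mu> \<le> \<theta>)"

definition legal_words :: "('a \<Rightarrow> 'a list) \<Rightarrow> 'a list set" where
  "legal_words S = {u. \<exists>n a. sublist u ((subst_word S ^^ n) [a])}"

definition lin_rep_const :: "('a \<Rightarrow> 'a list) \<Rightarrow> real \<Rightarrow> bool" where
  "lin_rep_const S C \<longleftrightarrow> C \<ge> 1 \<and>
     (\<forall>u \<in> legal_words S. \<forall>w \<in> legal_words S.
        real (length w) \<ge> C * real (length u) \<longrightarrow> sublist u w)"

text \<open>Length bound constants: check_C * theta^n \<le> |S^n(a)| \<le> hat_C * theta^n.\<close>
definition growth_consts :: "('a \<Rightarrow> 'a list) \<Rightarrow> real \<Rightarrow> real \<Rightarrow> real \<Rightarrow> bool" where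
  "growth_consts S \<theta> Cc Ch \<longleftrightarrow> Cc > 0 \<and> Ch > 0 \<and>
     (\<forall>a n. Cc * \<theta> ^ n \<le> real (length ((subst_word S ^^ n) [a])) \<and>
            real (length ((subst_word S ^^ n) [a])) \<le> Ch * \<theta> ^ n)"

text \<open>Substitution on configurations Z \<rightarrow> A: concatenation with S(\<omega>(0)) starting
  at position 0. conf_pos gives the starting position of the block S(\<omega>(k)).\<close>
definition conf_pos :: "('a \<Rightarrow> 'a list) \<Rightarrow> (int \<Rightarrow> 'a) \<Rightarrow> int \<Rightarrow> int" where
  "conf_pos S \<omega> k =
     (if k \<ge> 0 then int (\<Sum>i<nat k. length (S (\<omega> (int i))))
      else - int (\<Sum>i\<in>{k..<0}. length (S (\<omega> i))))"

definition subst_conf :: "('a \<Rightarrow> 'a list) \<Rightarrow> (int \<Rightarrow> 'a) \<Rightarrow> int \<Rightarrow> 'a" where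
  "subst_conf S \<omega> m =
     (let k = (THE k. conf_pos S \<omega> k \<le> m \<and> m < conf_pos S \<omega> (k + 1))
      in S (\<omega> k) ! nat (m - conf_pos S \<omega> k))"

text \<open>Closure of the shift orbit of x in A^Z (product of discrete topologies):
  \<omega> is in it iff every central window of \<omega> appears in x at some shift.\<close>
definition orbit_closure :: "(int \<Rightarrow> 'a) \<Rightarrow> (int \<Rightarrow> 'a) set" where
  "orbit_closure x = {\<omega>. \<forall>N::nat. \<exists>k::int. \<forall>i::int. \<bar>i\<bar> \<le> int N \<longrightarrow> \<omega> i = x (i + k)}"

definition Omega_n :: "('a \<Rightarrow> 'a list) \<Rightarrow> nat \<Rightarrow> (int \<Rightarrow> 'a) \<Rightarrow> (int \<Rightarrow> 'a) set" where
  "Omega_n S n \<omega>0 = orbit_closure ((subst_conf S ^^ n) \<omega>0)"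

definition conf_words :: "(int \<Rightarrow> 'a) set \<Rightarrow> 'a list set" where
  "conf_words \<Omega> = {u. \<exists>\<omega>\<in>\<Omega>. \<exists>i::int. u = map (\<lambda>j. \<omega> (i + int j)) [0..<length u]}"

definition words_of_len :: "'a list set \<Rightarrow> nat \<Rightarrow> 'a list set" where
  "words_of_len W r = {u \<in> W. length u = r}"

definition G_edge :: "('a \<Rightarrow> 'a list) \<Rightarrow> 'a list \<Rightarrow> 'a list \<Rightarrow> bool" where
  "G_edge S u w \<longleftrightarrow> length u = 2 \<and> length w = 2 \<and>
     u \<notin> legal_words S \<and> w \<notin> legal_words S \<and> sublist w (subst_word S u)"

definition G_path :: "('a \<Rightarrow> 'a list) \<Rightarrow> 'a list list \<Rightarrow> bool" where
  "G_path S vs \<longleftrightarrow> vs \<noteq> [] \<and> length (hd vs) = 2 \<and>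
     (\<forall>i. Suc i < length vs \<longrightarrow> G_edge S (vs ! i) (vs ! Suc i))"

text \<open>Good approximant: no directed path starting at a length-2 subword of \<omega>0
  contains a closed subpath (i.e. it never revisits a vertex).\<close>
definition good_approximant :: "('a \<Rightarrow> 'a list) \<Rightarrow> (int \<Rightarrow> 'a) \<Rightarrow> bool" where
  "good_approximant S \<omega>0 \<longleftrightarrow>
     (\<forall>vs. G_path S vs \<and> (\<exists>i. hd vs = [\<omega>0 i, \<omega>0 (i + 1)]) \<longrightarrow> distinct vs)"

end

theory Submission
  imports Defs
begin

text \<open>Write \<open>\<sigma>\<^sup>n(a)\<close> for the \<open>n\<close>-th iterate of \<open>S\<close> on a letter \<open>a\<close>. Substituting \<open>n\<close> times in
  a configuration is substituting once with \<open>\<sigma>\<^sup>n\<close>, so \<open>S\<^sup>n(\<omega>\<^sub>0)\<close> is the concatenation of the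
  blocks \<open>\<sigma>\<^sup>n(\<omega>\<^sub>0(k))\<close>.

  (1) By linear repetitivity a legal word of length \<open>r\<close> occurs in every legal word of length
  \<open>\<ge> C\<^sub>S r\<close>, in particular in the block \<open>\<sigma>\<^sup>n(\<omega>\<^sub>0(0))\<close> as soon as \<open>\<check>C \<theta>\<^sup>n \<ge> C\<^sub>S r\<close>.

  (2) Once the blocks are longer than \<open>r\<close>, a window of length \<open>r\<close> lies in \<open>\<sigma>\<^sup>n(b)\<sigma>\<^sup>n(c)\<close> for a
  pair \<open>bc\<close> of \<open>\<omega>\<^sub>0\<close>. Follow the pair formed by the last letter \<open>l\<close> of \<open>\<sigma>\<^sup>j(b)\<close> and the first
  letter \<open>f\<close> of \<open>\<sigma>\<^sup>j(c)\<close>: while it is illegal it moves along an edge of \<open>G(S)\<close>, and for a good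
  approximant this path cannot repeat a vertex. Every letter has a legal right neighbour, so
  there are at most \<open>|\<A>|\<^sup>2 - |\<A>|\<close> illegal pairs and \<open>lf\<close> is legal for some \<open>j \<le> |\<A>|\<^sup>2 - |\<A>|\<close>.
  Now \<open>\<sigma>\<^sup>n(b)\<sigma>\<^sup>n(c) = X \<sigma>\<^sup>n\<^sup>-\<^sup>j(l) \<sigma>\<^sup>n\<^sup>-\<^sup>j(f) W\<close>, and both middle blocks have length
  \<open>\<ge> 2\<check>C\<theta>\<^sup>t > r\<close> with \<open>t = n - |\<A>|\<^sup>2\<close> (after \<open>|\<A>|\<close> steps every block has length \<open>\<ge> 2\<close>), so the
  window lies in one of the legal words \<open>\<sigma>\<^sup>n(b)\<close>, \<open>\<sigma>\<^sup>n\<^sup>-\<^sup>j(lf)\<close>, \<open>\<sigma>\<^sup>n(c)\<close>.\<close>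

section \<open>Substitution on configurations\<close>

lemma conf_pos_0 [simp]: "conf_pos S \<omega> 0 = 0"
  by (simp add: conf_pos_def)

lemma conf_pos_succ: "conf_pos S \<omega> (k + 1) = conf_pos S \<omega> k + int (length (S (\<omega> k)))"
proof (cases "k \<ge> 0")
  case True
  then have "nat (k + 1) = Suc (nat k)" by simp
  with True show ?thesis by (simp add: conf_pos_def)
next
  case False
  show ?thesis
  proof (cases "k = -1")
    case True
    have "{-1..<0::int} = {-1}" by auto
    with True show ?thesis by (simp add: conf_pos_def)
  next
    case k: False
    have "{k..<0} = insert k {k + 1..<0}" using False by auto
    with False k show ?thesis by (simp add: conf_pos_def)
  qed
qed

lemma conf_pos_eqI:
  assumes "Q 0 = 0" "\<And>k. Q (k + 1) = Q k + int (length (S (\<omega> k)))"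
  shows "Q k = conf_pos S \<omega> k"
proof (induction k rule: int_induct[where k = 0])
  case base
  then show ?case using assms(1) by simp
next
  case (step1 i)
  then show ?case using assms(2)[of i] conf_pos_succ[of S \<omega> i] by simp
next
  case (step2 i)
  then show ?case using assms(2)[of "i - 1"] conf_pos_succ[of S \<omega> "i - 1"] by simp
qed

lemma conf_pos_strict_mono:
  assumes "nonerasing S" "i < j"
  shows "conf_pos S \<omega> i < conf_pos S \<omega> j"
proof -
  have succ: "conf_pos S \<omega> k < conf_pos S \<omega> (k + 1)" for k
    using assms(1) by (simp add: conf_pos_succ nonerasing_def)
  from assms(2) show ?thesis
  proof (induction j rule: int_gr_induct)
    case base
    then show ?case using succ by blast
  next
    case (step j)
    then show ?case using succ[of j] by simp
  qed
qed

lemma conf_pos_cover_ex: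
  assumes "nonerasing S"
  shows "\<exists>k. conf_pos S \<omega> k \<le> m \<and> m < conf_pos S \<omega> (k + 1)"
proof (induction m rule: int_induct[where k = 0])
  case base
  show ?case using conf_pos_strict_mono[OF assms, of 0 1 \<omega>] by (auto intro!: exI[of _ 0])
next
  case (step1 i)
  then obtain k where k: "conf_pos S \<omega> k \<le> i" "i < conf_pos S \<omega> (k + 1)" by blast
  show ?case
  proof (cases "i + 1 < conf_pos S \<omega> (k + 1)")
    case True
    with k show ?thesis by (intro exI[of _ k]) auto
  next
    case False
    with k conf_pos_strict_mono[OF assms, of "k + 1" "k + 1 + 1" \<omega>] show ?thesis
      by (intro exI[of _ "k + 1"]) auto
  qed
next
  case (step2 i)
  then obtain k where k: "conf_pos S \<omega> k \<le> i" "i < conf_pos S \<omega> (k + 1)" by blast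
  show ?case
  proof (cases "conf_pos S \<omega> k \<le> i - 1")
    case True
    with k show ?thesis by auto
  next
    case False
    with k conf_pos_strict_mono[OF assms, of "k - 1" k \<omega>] show ?thesis
      by (intro exI[of _ "k - 1"]) auto
  qed
qed

lemma conf_pos_cover_unique:
  assumes "nonerasing S"
    and "conf_pos S \<omega> k \<le> m" "m < conf_pos S \<omega> (k + 1)"
    and "conf_pos S \<omega> l \<le> m" "m < conf_pos S \<omega> (l + 1)"
  shows "k = l"
proof (rule ccontr)
  have le: "conf_pos S \<omega> (i + 1) \<le> conf_pos S \<omega> j" if "i < j" for i j
    using conf_pos_strict_mono[OF assms(1), of "i + 1" j \<omega>] that by (cases "i + 1 = j") auto
  assume "k \<noteq> l"
  then consider "k < l" | "l < k" by linarith
  then show False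
    by cases (use le[of k l] le[of l k] assms in auto)
qed

lemma subst_conf_conf_pos:
  assumes "nonerasing S" "j < length (S (\<omega> k))"
  shows "subst_conf S \<omega> (conf_pos S \<omega> k + int j) = S (\<omega> k) ! j"
proof -
  let ?m = "conf_pos S \<omega> k + int j"
  have k: "conf_pos S \<omega> k \<le> ?m \<and> ?m < conf_pos S \<omega> (k + 1)"
    using assms(2) by (simp add: conf_pos_succ)
  have "(THE k'. conf_pos S \<omega> k' \<le> ?m \<and> ?m < conf_pos S \<omega> (k' + 1)) = k"
    using k conf_pos_cover_unique[OF assms(1)] by (intro the_equality) blast+
  then show ?thesis by (simp add: subst_conf_def Let_def)
qed

lemma conf_pos_decompose:
  assumes "nonerasing S"
  obtains k j where "m = conf_pos S \<omega> k + int j" "j < length (S (\<omega> k))"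
proof -
  obtain k where k: "conf_pos S \<omega> k \<le> m" "m < conf_pos S \<omega> (k + 1)"
    using conf_pos_cover_ex[OF assms] by blast
  show ?thesis
    using k by (intro that[of k "nat (m - conf_pos S \<omega> k)"]) (auto simp: conf_pos_succ)
qed

definition window :: "(int \<Rightarrow> 'a) \<Rightarrow> int \<Rightarrow> nat \<Rightarrow> 'a list" where
  "window \<omega> i d = map (\<lambda>j. \<omega> (i + int j)) [0..<d]"

lemma length_window [simp]: "length (window \<omega> i d) = d"
  by (simp add: window_def)

lemma nth_window [simp]: "j < d \<Longrightarrow> window \<omega> i d ! j = \<omega> (i + int j)"
  by (simp add: window_def)

lemma window_Suc: "window \<omega> i (Suc d) = window \<omega> i d @ [\<omega> (i + int d)]"
  by (simp add: window_def)

lemma window_drop_take: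
  assumes "window \<omega> i d = w" "j + r \<le> d"
  shows "window \<omega> (i + int j) r = take r (drop j w)"
proof (rule nth_equalityI)
  fix q assume "q < length (window \<omega> (i + int j) r)"
  with assms show "window \<omega> (i + int j) r ! q = take r (drop j w) ! q"
    by (auto simp: add.assoc)
qed (use assms in auto)

lemma subst_word_Nil [simp]: "subst_word S [] = []"
  and subst_word_Cons [simp]: "subst_word S (a # v) = S a @ subst_word S v"
  and subst_word_append [simp]: "subst_word S (u @ v) = subst_word S u @ subst_word S v"
  by (simp_all add: subst_word_def)

lemma subst_conf_window:
  assumes "nonerasing S"
  shows "conf_pos S \<omega> (i + int d) = conf_pos S \<omega> i + int (length (subst_word S (window \<omega> i d)))
     \<and> window (subst_conf S \<omega>) (conf_pos S \<omega> i) (length (subst_word S (window \<omega> i d)))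
         = subst_word S (window \<omega> i d)"
proof (induction d)
  case 0
  then show ?case by (simp add: window_def)
next
  case (Suc d)
  let ?W = "subst_word S (window \<omega> i d)" and ?B = "S (\<omega> (i + int d))"
  have pos: "conf_pos S \<omega> (i + int (Suc d)) = conf_pos S \<omega> i + int (length ?W) + int (length ?B)"
    using Suc.IH conf_pos_succ[of S \<omega> "i + int d"] by (simp add: ac_simps)
  have "window (subst_conf S \<omega>) (conf_pos S \<omega> i) (length ?W + length ?B) = ?W @ ?B"
  proof (rule nth_equalityI)
    fix j assume "j < length (window (subst_conf S \<omega>) (conf_pos S \<omega> i) (length ?W + length ?B))"
    then have j: "j < length ?W + length ?B" by simp
    show "window (subst_conf S \<omega>) (conf_pos S \<omega> i) (length ?W + length ?B) ! j = (?W @ ?B) ! j"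
    proof (cases "j < length ?W")
      case True
      then have "window (subst_conf S \<omega>) (conf_pos S \<omega> i) (length ?W) ! j = ?W ! j"
        using Suc.IH by simp
      with True j show ?thesis by (simp add: nth_append)
    next
      case False
      then have "subst_conf S \<omega> (conf_pos S \<omega> i + int j)
          = subst_conf S \<omega> (conf_pos S \<omega> (i + int d) + int (j - length ?W))"
        using Suc.IH by simp
      also have "\<dots> = ?B ! (j - length ?W)"
        using False j by (intro subst_conf_conf_pos[OF assms]) auto
      finally show ?thesis using j False by (simp add: nth_append)
    qed
  qed simp
  with pos show ?case by (simp add: window_Suc)
qed

lemma subst_conf_block:
  assumes "nonerasing S"
  shows "window (subst_conf S \<omega>) (conf_pos S \<omega> k) (length (S (\<omega> k))) = S (\<omega> k)"
  using subst_conf_window[OF assms, of \<omega> k 1] by (simp add: window_def)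

lemma length_subst_word_ge:
  assumes "nonerasing S"
  shows "length w \<le> length (subst_word S w)"
proof (induction w)
  case (Cons a w)
  have "S a \<noteq> []" using assms by (simp add: nonerasing_def)
  with Cons show ?case by (cases "S a") auto
qed simp

lemma nonerasing_subst_word_comp:
  assumes "nonerasing S" "nonerasing T"
  shows "nonerasing (\<lambda>a. subst_word S (T a))"
  using assms length_subst_word_ge[OF assms(1)] unfolding nonerasing_def
  by (metis le_zero_eq length_0_conv)

lemma subst_conf_comp:
  assumes S: "nonerasing S" and T: "nonerasing T"
  shows "subst_conf S (subst_conf T \<omega>) = subst_conf (\<lambda>a. subst_word S (T a)) \<omega>"
proof
  fix m
  let ?Y = "subst_conf T \<omega>" and ?U = "\<lambda>a. subst_word S (T a)"
  have image: "conf_pos S ?Y (conf_pos T \<omega> k + int (length (T (\<omega> k))))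
        = conf_pos S ?Y (conf_pos T \<omega> k) + int (length (?U (\<omega> k)))
      \<and> window (subst_conf S ?Y) (conf_pos S ?Y (conf_pos T \<omega> k)) (length (?U (\<omega> k))) = ?U (\<omega> k)"
    for k
    using subst_conf_window[OF S, of ?Y "conf_pos T \<omega> k" "length (T (\<omega> k))"]
      subst_conf_block[OF T, of \<omega> k] by simp
  have pos: "conf_pos S ?Y (conf_pos T \<omega> k) = conf_pos ?U \<omega> k" for k
    by (rule conf_pos_eqI) (use image in \<open>simp_all add: conf_pos_succ\<close>)
  obtain k j where kj: "m = conf_pos ?U \<omega> k + int j" "j < length (?U (\<omega> k))"
    using conf_pos_decompose[OF nonerasing_subst_word_comp[OF S T]] by blast
  have "subst_conf S ?Y m
      = window (subst_conf S ?Y) (conf_pos S ?Y (conf_pos T \<omega> k)) (length (?U (\<omega> k))) ! j"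
    using kj pos[of k] by simp
  also have "\<dots> = subst_conf ?U \<omega> m"
    using image[of k] kj subst_conf_conf_pos[OF nonerasing_subst_word_comp[OF S T]] by simp
  finally show "subst_conf S ?Y m = subst_conf ?U \<omega> m" .
qed

lemma subst_conf_singleton: "subst_conf (\<lambda>x. [x]) \<omega> = \<omega>"
proof
  fix m
  have "conf_pos (\<lambda>x. [x]) \<omega> k = k" for k
    by (rule conf_pos_eqI[symmetric]) auto
  then show "subst_conf (\<lambda>x. [x]) \<omega> m = \<omega> m"
    using subst_conf_conf_pos[of "\<lambda>x. [x]" 0 \<omega> m] by (simp add: nonerasing_def)
qed

section \<open>Iterates of the substitution on words\<close>

definition subst_pow :: "('a \<Rightarrow> 'a list) \<Rightarrow> nat \<Rightarrow> 'a \<Rightarrow> 'a list" where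
  "subst_pow S n a = (subst_word S ^^ n) [a]"

lemma funpow_subst_word_Nil [simp]: "(subst_word S ^^ n) [] = []"
  by (induction n) auto

lemma funpow_subst_word_append [simp]:
  "(subst_word S ^^ n) (u @ v) = (subst_word S ^^ n) u @ (subst_word S ^^ n) v"
  by (induction n) auto

lemma funpow_subst_word_Cons: "(subst_word S ^^ n) (a # v) = subst_pow S n a @ (subst_word S ^^ n) v"
  using funpow_subst_word_append[where S = S and n = n and u = "[a]" and v = v] by (simp add: subst_pow_def)

lemma subst_pow_0 [simp]: "subst_pow S 0 a = [a]"
  by (simp add: subst_pow_def)

lemma subst_pow_Suc: "subst_pow S (Suc n) a = subst_word S (subst_pow S n a)"
  by (simp add: subst_pow_def)

lemma subst_pow_add: "subst_pow S (m + n) a = (subst_word S ^^ m) (subst_pow S n a)"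
  by (simp add: subst_pow_def funpow_add)

lemma length_funpow_subst_word_ge:
  assumes "nonerasing S"
  shows "length w \<le> length ((subst_word S ^^ n) w)"
  by (induction n) (auto intro: order_trans length_subst_word_ge[OF assms])

lemma length_funpow_subst_word_lower:
  assumes "\<And>a. c \<le> real (length (subst_pow S n a))"
  shows "real (length w) * c \<le> real (length ((subst_word S ^^ n) w))"
proof (induction w)
  case (Cons a w)
  then show ?case using assms[of a] by (simp add: funpow_subst_word_Cons algebra_simps)
qed simp

lemma nonerasing_subst_pow:
  assumes "nonerasing S"
  shows "nonerasing (subst_pow S n)"
  unfolding nonerasing_def subst_pow_def
proof
  fix a
  show "(subst_word S ^^ n) [a] \<noteq> []"
    using length_funpow_subst_word_ge[OF assms, of "[a]" n] by auto
qed

lemma funpow_subst_conf: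
  assumes "nonerasing S"
  shows "(subst_conf S ^^ n) \<omega> = subst_conf (subst_pow S n) \<omega>"
proof (induction n)
  case 0
  then show ?case by (simp add: subst_pow_def subst_conf_singleton)
next
  case (Suc n)
  have "(subst_conf S ^^ Suc n) \<omega> = subst_conf S (subst_conf (subst_pow S n) \<omega>)"
    using Suc by simp
  also have "\<dots> = subst_conf (\<lambda>a. subst_word S (subst_pow S n a)) \<omega>"
    by (rule subst_conf_comp[OF assms nonerasing_subst_pow[OF assms]])
  also have "(\<lambda>a. subst_word S (subst_pow S n a)) = subst_pow S (Suc n)"
    by (simp add: subst_pow_Suc fun_eq_iff)
  finally show ?case .
qed

lemma Omega_n_eq: "nonerasing S \<Longrightarrow> Omega_n S n \<omega>0 = orbit_closure (subst_conf (subst_pow S n) \<omega>0)"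
  by (simp add: Omega_n_def funpow_subst_conf)

section \<open>Legal words\<close>

lemma funpow_subst_word_sublist:
  assumes "sublist u v"
  shows "sublist ((subst_word S ^^ n) u) ((subst_word S ^^ n) v)"
proof -
  obtain p s where "v = p @ u @ s" using assms by (auto simp: sublist_def)
  then show ?thesis by (simp add: sublist_appendI)
qed

lemma legal_words_sublist: "u \<in> legal_words S \<Longrightarrow> sublist v u \<Longrightarrow> v \<in> legal_words S"
  unfolding legal_words_def by (auto intro: sublist_order.order_trans)

lemma subst_pow_legal: "subst_pow S n a \<in> legal_words S"
  by (auto simp: legal_words_def subst_pow_def)

lemma legal_words_funpow:
  assumes "u \<in> legal_words S"
  shows "(subst_word S ^^ n) u \<in> legal_words S"
proof -
  obtain m a where "sublist u (subst_pow S m a)"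
    using assms by (auto simp: legal_words_def subst_pow_def)
  then have "sublist ((subst_word S ^^ n) u) (subst_pow S (n + m) a)"
    by (simp add: subst_pow_add funpow_subst_word_sublist)
  then show ?thesis by (rule legal_words_sublist[OF subst_pow_legal])
qed

lemma legal_words_short:
  assumes "length u \<le> 1"
  shows "u \<in> legal_words S"
proof -
  obtain a :: 'a where "sublist u [a]"
    using assms by (cases u) auto
  then have "sublist u ((subst_word S ^^ 0) [a])" by simp
  then show ?thesis unfolding legal_words_def by blast
qed

section \<open>Growth of the iterates\<close>

locale subst_growth =
  fixes S :: "'a::finite \<Rightarrow> 'a list" and \<theta> Cc Ch :: real
  assumes nonerasing: "nonerasing S" and growth: "growth_consts S \<theta> Cc Ch"
begin

lemma Cc_pos: "Cc > 0" and Ch_pos: "Ch > 0"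
  using growth by (auto simp: growth_consts_def)

lemma length_subst_pow_lower: "Cc * \<theta> ^ n \<le> real (length (subst_pow S n a))"
  and length_subst_pow_upper: "real (length (subst_pow S n a)) \<le> Ch * \<theta> ^ n"
  using growth by (simp_all add: growth_consts_def subst_pow_def)

lemma length_subst_pow_pos: "1 \<le> length (subst_pow S n a)"
  using nonerasing_subst_pow[OF nonerasing, of n]
  by (cases "subst_pow S n a") (auto simp: nonerasing_def)

lemma Cc_le_1: "Cc \<le> 1"
  using length_subst_pow_lower[of 0] by simp

lemma theta_ge_1: "\<theta> \<ge> 1"
proof (rule ccontr)
  assume "\<not> \<theta> \<ge> 1"
  obtain a :: 'a where True by simp
  have "1 \<le> Ch * \<theta>"
    using length_subst_pow_upper[of 1 a] length_subst_pow_pos[of 1 a] by simp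
  then have pos: "\<theta> > 0" using Ch_pos by (smt (verit) mult_nonneg_nonpos)
  with \<open>\<not> \<theta> \<ge> 1\<close> have "1 < 1 / \<theta>" by simp
  then obtain n where "Ch < (1 / \<theta>) ^ n" using real_arch_pow by blast
  then have "Ch * \<theta> ^ n < 1" using pos by (simp add: power_divide field_simps)
  then show False using length_subst_pow_upper[of n a] length_subst_pow_pos[of n a] by simp
qed

lemma length_subst_pow_mono: "m \<le> n \<Longrightarrow> length (subst_pow S m a) \<le> length (subst_pow S n a)"
  using subst_pow_add[of S "n - m" m a] length_funpow_subst_word_ge[OF nonerasing] by simp

text \<open>Otherwise \<open>\<sigma>\<^sup>j(a)\<close> is a single letter for \<open>j \<le> |\<A>|\<close>, so some letter is periodic and its
  iterates stay of length 1, contradicting exponential growth.\<close>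
lemma length_subst_pow_card_ge_2:
  assumes "\<theta> > 1"
  shows "2 \<le> length (subst_pow S (card (UNIV :: 'a set)) a)"
proof (rule ccontr)
  let ?k = "card (UNIV :: 'a set)"
  assume "\<not> 2 \<le> length (subst_pow S ?k a)"
  define f where "f j = hd (subst_pow S j a)" for j
  have single: "subst_pow S j a = [f j]" if "j \<le> ?k" for j
  proof -
    have "length (subst_pow S j a) = 1"
      using length_subst_pow_mono[OF that, of a] length_subst_pow_pos[of j a] \<open>\<not> 2 \<le> _\<close> by simp
    then show ?thesis unfolding f_def by (cases "subst_pow S j a") auto
  qed
  have "\<not> inj_on f {0..?k}"
  proof
    assume "inj_on f {0..?k}"
    then have "card {0..?k} \<le> card (UNIV :: 'a set)" by (rule card_inj_on_le) auto
    then show False by simp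
  qed
  then obtain i j where ij: "i < j" "j \<le> ?k" "f i = f j"
    unfolding inj_on_def by (metis atLeastAtMost_iff le0 linorder_neqE_nat)
  define d where "d = j - i"
  have "j = d + i" using ij by (simp add: d_def)
  then have "subst_pow S j a = (subst_word S ^^ d) (subst_pow S i a)"
    by (simp only: subst_pow_add)
  then have period: "subst_pow S d (f i) = [f i]"
    using single[of i] single[of j] ij by (simp add: subst_pow_def)
  have periodic: "subst_pow S (l * d) (f i) = [f i]" for l
  proof (induction l)
    case (Suc l)
    have "subst_pow S (Suc l * d) (f i) = (subst_word S ^^ d) (subst_pow S (l * d) (f i))"
      by (simp only: mult_Suc subst_pow_add)
    with Suc period show ?case by (simp add: subst_pow_def)
  qed simp
  have "1 < \<theta> ^ d" using assms ij by (simp add: d_def one_less_power)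
  then obtain l where l: "1 / Cc < (\<theta> ^ d) ^ l" using real_arch_pow by blast
  have "Cc * (\<theta> ^ d) ^ l \<le> 1"
    using length_subst_pow_lower[of "l * d" "f i"] periodic[of l] by (simp add: power_mult mult.commute)
  moreover have "1 < Cc * (\<theta> ^ d) ^ l"
    using l Cc_pos by (simp add: pos_divide_less_eq mult.commute)
  ultimately show False by linarith
qed

lemma length_subst_pow_lower_2:
  assumes "\<theta> > 1" "t + card (UNIV :: 'a set) \<le> n"
  shows "2 * Cc * \<theta> ^ t \<le> real (length (subst_pow S n a))"
proof -
  have "card (UNIV :: 'a set) \<le> n - t" using assms(2) by simp
  then have "2 \<le> length (subst_pow S (n - t) a)"
    using length_subst_pow_card_ge_2[OF assms(1), of a] length_subst_pow_mono[of _ "n - t" a] by (meson le_trans)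
  then have "2 * (Cc * \<theta> ^ t) \<le> real (length (subst_pow S (n - t) a)) * (Cc * \<theta> ^ t)"
    using Cc_pos theta_ge_1 by (intro mult_right_mono) auto
  also have "\<dots> \<le> real (length (subst_pow S n a))"
    using subst_pow_add[of S t "n - t" a] assms(2)
      length_funpow_subst_word_lower[OF length_subst_pow_lower] by simp
  finally show ?thesis by simp
qed

end

section \<open>The boundary pairs and the graph \<open>G(S)\<close>\<close>

primrec last_letter_iter :: "('a \<Rightarrow> 'a list) \<Rightarrow> 'a \<Rightarrow> nat \<Rightarrow> 'a" where
  "last_letter_iter S b 0 = b"
| "last_letter_iter S b (Suc j) = last (S (last_letter_iter S b j))"

primrec first_letter_iter :: "('a \<Rightarrow> 'a list) \<Rightarrow> 'a \<Rightarrow> nat \<Rightarrow> 'a" where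
  "first_letter_iter S c 0 = c"
| "first_letter_iter S c (Suc j) = hd (S (first_letter_iter S c j))"

lemma subst_pow_last_letter:
  assumes "nonerasing S"
  obtains w where "subst_pow S j b = w @ [last_letter_iter S b j]"
proof (induction j arbitrary: thesis)
  case 0
  then show ?case by simp
next
  case (Suc j)
  then obtain w where w: "subst_pow S j b = w @ [last_letter_iter S b j]" by blast
  have "S (last_letter_iter S b j) \<noteq> []" using assms by (simp add: nonerasing_def)
  then have "subst_pow S (Suc j) b
      = (subst_word S w @ butlast (S (last_letter_iter S b j))) @ [last_letter_iter S b (Suc j)]"
    using w by (simp add: subst_pow_Suc)
  then show ?case by (rule Suc.prems)
qed

lemma subst_pow_first_letter:
  assumes "nonerasing S"
  obtains w where "subst_pow S j c = first_letter_iter S c j # w"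
proof (induction j arbitrary: thesis)
  case 0
  then show ?case by simp
next
  case (Suc j)
  then obtain w where w: "subst_pow S j c = first_letter_iter S c j # w" by blast
  have "S (first_letter_iter S c j) \<noteq> []" using assms by (simp add: nonerasing_def)
  then have "subst_pow S (Suc j) c
      = first_letter_iter S c (Suc j) # tl (S (first_letter_iter S c j)) @ subst_word S w"
    using w by (simp add: subst_pow_Suc)
  then show ?case by (rule Suc.prems)
qed

lemma boundary_pair_sublist:
  assumes "nonerasing S"
  shows "sublist [last_letter_iter S b (Suc j), first_letter_iter S c (Suc j)]
           (subst_word S [last_letter_iter S b j, first_letter_iter S c j])"
proof -
  obtain w l where wl: "S (last_letter_iter S b j) = w @ [l]"
    using assms by (metis append_butlast_last_id nonerasing_def)
  obtain h v where hv: "S (first_letter_iter S c j) = h # v"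
    using assms by (metis list.exhaust nonerasing_def)
  have "sublist [l, h] (w @ [l, h] @ v)" by (rule sublist_appendI)
  with wl hv show ?thesis by simp
qed

lemma sublist_append_short_cases:
  assumes "sublist u ((x @ y) @ (z @ w))" "length u \<le> length y" "length u \<le> length z"
  shows "sublist u (x @ y) \<or> sublist u (y @ z) \<or> sublist u (z @ w)"
proof -
  have "sublist u (y @ z)" if u: "u = u1 @ u2" "suffix u1 (x @ y)" "prefix u2 (z @ w)" for u1 u2
  proof -
    have "suffix u1 y" "prefix u2 z"
      using suffix_length_suffix[OF u(2), of y] prefix_length_prefix[OF u(3), of z] u(1) assms(2,3)
      by (auto simp: suffix_def prefix_def)
    then obtain y' z' where "y @ z = y' @ u @ z'"
      using u(1) by (auto simp: suffix_def prefix_def)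
    then show ?thesis by (metis sublist_appendI)
  qed
  with assms(1) show ?thesis unfolding sublist_append[of u "x @ y"] by blast
qed

definition legal_pairs :: "('a \<Rightarrow> 'a list) \<Rightarrow> 'a list set" where
  "legal_pairs S = {u. length u = 2 \<and> u \<in> legal_words S}"

definition illegal_pairs :: "('a \<Rightarrow> 'a list) \<Rightarrow> 'a list set" where
  "illegal_pairs S = {u. length u = 2 \<and> u \<notin> legal_words S}"

lemma finite_pairs: "finite {u :: 'a::finite list. length u = 2}"
  using finite_lists_length_eq[of "UNIV :: 'a set" 2] by simp

lemma finite_legal_pairs: "finite (legal_pairs (S :: 'a::finite \<Rightarrow> 'a list))"
  and finite_illegal_pairs: "finite (illegal_pairs (S :: 'a::finite \<Rightarrow> 'a list))"
  by (auto intro: rev_finite_subset[OF finite_pairs] simp: legal_pairs_def illegal_pairs_def)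

lemma card_illegal_pairs:
  "card (illegal_pairs (S :: 'a::finite \<Rightarrow> 'a list)) = card (UNIV :: 'a set) ^ 2 - card (legal_pairs S)"
proof -
  have "illegal_pairs S = {u. length u = 2} - legal_pairs S"
    by (auto simp: illegal_pairs_def legal_pairs_def)
  moreover have "card {u :: 'a list. length u = 2} = card (UNIV :: 'a set) ^ 2"
    using card_lists_length_eq[of "UNIV :: 'a set" 2] by simp
  moreover have "legal_pairs S \<subseteq> {u. length u = 2}"
    by (auto simp: legal_pairs_def)
  ultimately show ?thesis
    by (simp add: card_Diff_subset[OF finite_legal_pairs])
qed

text \<open>The boundary pairs of \<open>\<sigma>\<^sup>j(b)\<sigma>\<^sup>j(c)\<close> form a path in \<open>G(S)\<close> as long as they are illegal.\<close>
lemma good_approximant_boundary_pair_legal: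
  fixes S :: "'a::finite \<Rightarrow> 'a list"
  assumes "nonerasing S" and "good_approximant S \<omega>0"
  shows "\<exists>j \<le> card (illegal_pairs S).
           [last_letter_iter S (\<omega>0 i) j, first_letter_iter S (\<omega>0 (i + 1)) j] \<in> legal_words S"
proof (rule ccontr)
  let ?pair = "\<lambda>j. [last_letter_iter S (\<omega>0 i) j, first_letter_iter S (\<omega>0 (i + 1)) j]"
  let ?K = "card (illegal_pairs S)"
  assume "\<not> ?thesis"
  then have illegal: "?pair j \<notin> legal_words S" if "j \<le> ?K" for j
    using that by blast
  define vs where "vs = map ?pair [0..<Suc ?K]"
  have hd_vs: "hd vs = [\<omega>0 i, \<omega>0 (i + 1)]"
    by (simp add: vs_def upt_conv_Cons del: upt_Suc)
  have "G_path S vs"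
    unfolding G_path_def
  proof (intro conjI allI impI)
    show "vs \<noteq> []" by (simp add: vs_def)
    show "length (hd vs) = 2" by (simp add: hd_vs)
  next
    fix q assume q: "Suc q < length vs"
    then have "vs ! q = ?pair q" "vs ! Suc q = ?pair (Suc q)"
      by (simp_all add: vs_def del: upt_Suc)
    with q show "G_edge S (vs ! q) (vs ! Suc q)"
      using illegal[of q] illegal[of "Suc q"] boundary_pair_sublist[OF assms(1)]
      by (simp add: G_edge_def vs_def)
  qed
  with hd_vs have "distinct vs"
    using assms(2) unfolding good_approximant_def by blast
  moreover have "set vs \<subseteq> illegal_pairs S"
    using illegal by (auto simp: vs_def illegal_pairs_def)
  then have "card (set vs) \<le> ?K"
    by (rule card_mono[OF finite_illegal_pairs])
  moreover have "length vs = Suc ?K" by (simp add: vs_def)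
  ultimately show False
    using distinct_card by fastforce
qed

context subst_growth
begin

lemma legal_right_neighbour:
  assumes "\<theta> > 1" and "primitive_subst S"
  obtains y where "[x, y] \<in> legal_words S"
proof -
  obtain p where p: "\<And>a b. b \<in> set (subst_pow S p a)"
    using assms(2) by (auto simp: primitive_subst_def subst_pow_def)
  obtain a :: 'a where True by simp
  let ?k = "card (UNIV :: 'a set)"
  obtain y v where yv: "subst_pow S ?k a = y # v" and "v \<noteq> []"
    using length_subst_pow_card_ge_2[OF assms(1), of a] by (cases "subst_pow S ?k a") fastforce+
  let ?R = "(subst_word S ^^ p) v"
  have "?R \<noteq> []"
    using length_funpow_subst_word_ge[OF nonerasing, of v p] \<open>v \<noteq> []\<close> by auto
  obtain u w where uw: "subst_pow S p y = u @ x # w"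
    using split_list[OF p[of x y]] by blast
  have "subst_pow S (p + ?k) a = u @ x # w @ ?R"
    using yv uw by (simp add: subst_pow_add funpow_subst_word_Cons)
  also have "\<dots> = u @ [x, hd (w @ ?R)] @ tl (w @ ?R)"
    using \<open>?R \<noteq> []\<close> by simp
  finally have "sublist [x, hd (w @ ?R)] (subst_pow S (p + ?k) a)"
    by (metis sublist_appendI)
  then show ?thesis
    by (intro that) (rule legal_words_sublist[OF subst_pow_legal])
qed

lemma card_legal_pairs_ge:
  assumes "\<theta> > 1" and "primitive_subst S"
  shows "card (UNIV :: 'a set) \<le> card (legal_pairs S)"
proof -
  define f where "f x = [x, SOME y. [x, y] \<in> legal_words S]" for x
  have "\<exists>y. [x, y] \<in> legal_words S" for x
    using legal_right_neighbour[OF assms] by blast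
  then have "f x \<in> legal_pairs S" for x
    using someI_ex[of "\<lambda>y. [x, y] \<in> legal_words S"] by (simp add: f_def legal_pairs_def)
  moreover have "inj f" by (rule injI) (simp add: f_def)
  ultimately show ?thesis
    using card_inj_on_le[of f UNIV "legal_pairs S"] finite_legal_pairs by auto
qed

lemma boundary_blocks_sublist_legal:
  assumes "\<theta> > 1" and "primitive_subst S" and "good_approximant S \<omega>0"
    and "t + card (UNIV :: 'a set) ^ 2 \<le> n" and "real (length u) < 2 * Cc * \<theta> ^ t"
    and "sublist u (subst_pow S n (\<omega>0 i) @ subst_pow S n (\<omega>0 (i + 1)))"
  shows "u \<in> legal_words S"
proof -
  let ?k = "card (UNIV :: 'a set)" and ?b = "\<omega>0 i" and ?c = "\<omega>0 (i + 1)"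
  obtain j where j: "j \<le> card (illegal_pairs S)"
    and legal: "[last_letter_iter S ?b j, first_letter_iter S ?c j] \<in> legal_words S"
    using good_approximant_boundary_pair_legal[OF nonerasing assms(3)] by blast
  have "j \<le> ?k ^ 2 - ?k"
    using j card_illegal_pairs[of S] card_legal_pairs_ge[OF assms(1,2)] by simp
  moreover have "?k \<le> ?k ^ 2"
    by (simp add: power2_eq_square)
  ultimately have jk: "j + ?k \<le> ?k ^ 2" by linarith
  define m where "m = n - j"
  have n: "n = m + j" and tm: "t + ?k \<le> m"
    using assms(4) jk by (simp_all add: m_def)
  obtain x where x: "subst_pow S j ?b = x @ [last_letter_iter S ?b j]"
    using subst_pow_last_letter[OF nonerasing] .
  obtain z where z: "subst_pow S j ?c = first_letter_iter S ?c j # z"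
    using subst_pow_first_letter[OF nonerasing] .
  let ?X = "(subst_word S ^^ m) x" and ?Y = "subst_pow S m (last_letter_iter S ?b j)"
    and ?Z = "subst_pow S m (first_letter_iter S ?c j)" and ?W = "(subst_word S ^^ m) z"
  have b: "subst_pow S n ?b = ?X @ ?Y"
    unfolding n subst_pow_add x by (simp add: funpow_subst_word_Cons)
  have c: "subst_pow S n ?c = ?Z @ ?W"
    unfolding n subst_pow_add z by (simp add: funpow_subst_word_Cons)
  have "length u \<le> length ?Y" "length u \<le> length ?Z"
    using length_subst_pow_lower_2[OF assms(1) tm] assms(5) by (smt (verit) of_nat_le_iff)+
  then consider "sublist u (?X @ ?Y)" | "sublist u (?Y @ ?Z)" | "sublist u (?Z @ ?W)"
    using sublist_append_short_cases assms(6) b c by (metis append.assoc)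
  then show ?thesis
  proof cases
    case 2
    have "?Y @ ?Z \<in> legal_words S"
      using legal_words_funpow[OF legal, of m] by (simp add: funpow_subst_word_Cons)
    with 2 show ?thesis by (blast intro: legal_words_sublist)
  qed (use b c subst_pow_legal legal_words_sublist in metis)+
qed

end

section \<open>Windows of the orbit closure\<close>

lemma window_in_conf_words_orbit_closure: "window X i r \<in> conf_words (orbit_closure X)"
proof -
  have "X \<in> orbit_closure X"
    unfolding orbit_closure_def by (auto intro: exI[of _ 0])
  then show ?thesis
    unfolding conf_words_def window_def by auto
qed

lemma conf_words_orbit_closure_window:
  assumes "u \<in> conf_words (orbit_closure X)"
  obtains i where "u = window X i (length u)"
proof -
  obtain \<omega> i where \<omega>: "\<omega> \<in> orbit_closure X" and u: "u = window \<omega> i (length u)"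
    using assms unfolding conf_words_def window_def by auto
  obtain k where k: "\<And>i'. \<bar>i'\<bar> \<le> int (nat \<bar>i\<bar> + length u) \<Longrightarrow> \<omega> i' = X (i' + k)"
    using \<omega> unfolding orbit_closure_def by blast
  have "window \<omega> i (length u) = window X (i + k) (length u)"
    by (rule nth_equalityI) (use k in \<open>auto simp: ac_simps\<close>)
  with u show ?thesis by (intro that) simp
qed

lemma window_sublist_two_blocks:
  assumes "nonerasing T" and "\<And>x. r \<le> length (T x)"
  obtains k where "sublist (window (subst_conf T \<omega>) i r) (T (\<omega> k) @ T (\<omega> (k + 1)))"
proof -
  obtain k j where kj: "i = conf_pos T \<omega> k + int j" "j < length (T (\<omega> k))"
    using conf_pos_decompose[OF assms(1)] .
  let ?w = "T (\<omega> k) @ T (\<omega> (k + 1))"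
  have "window \<omega> k 2 = [\<omega> k, \<omega> (k + 1)]"
    by (simp add: window_def numeral_2_eq_2)
  then have "window (subst_conf T \<omega>) (conf_pos T \<omega> k) (length ?w) = ?w"
    using subst_conf_window[OF assms(1), of \<omega> k 2] by simp
  moreover have "j + r \<le> length ?w"
    using kj(2) assms(2)[of "\<omega> (k + 1)"] by simp
  ultimately have "window (subst_conf T \<omega>) i r = take r (drop j ?w)"
    using kj(1) window_drop_take by blast
  then show ?thesis
    by (intro that[of k]) (metis sublist_drop sublist_order.order_trans sublist_take)
qed

section \<open>The two inclusions\<close>

context subst_growth
begin

lemma legal_words_subset_Omega_n:
  assumes "lin_rep_const S C" and "C * real r \<le> Cc * \<theta> ^ n"
  shows "words_of_len (legal_words S) r \<subseteq> words_of_len (conf_words (Omega_n S n \<omega>0)) r"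
proof
  fix u assume "u \<in> words_of_len (legal_words S) r"
  then have legal: "u \<in> legal_words S" and r: "length u = r"
    by (auto simp: words_of_len_def)
  let ?X = "subst_conf (subst_pow S n) \<omega>0" and ?w = "subst_pow S n (\<omega>0 0)"
  have "C * real (length u) \<le> real (length ?w)"
    unfolding r using assms(2) length_subst_pow_lower[of n "\<omega>0 0"] by (rule order.trans)
  then have "sublist u ?w"
    using assms(1) legal subst_pow_legal[where S = S and n = n and a = "\<omega>0 0"] unfolding lin_rep_const_def by blast
  then obtain p s where w: "?w = p @ u @ s"
    by (auto simp: sublist_def)
  have "window ?X 0 (length ?w) = ?w"
    using subst_conf_block[OF nonerasing_subst_pow[OF nonerasing], where \<omega> = \<omega>0 and k = 0] by simp
  then have "window ?X (0 + int (length p)) r = take r (drop (length p) ?w)"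
    by (rule window_drop_take) (simp add: w r)
  also have "\<dots> = u"
    using w r by simp
  finally show "u \<in> words_of_len (conf_words (Omega_n S n \<omega>0)) r"
    using window_in_conf_words_orbit_closure[of ?X "int (length p)" r] r
    by (simp add: words_of_len_def Omega_n_eq[OF nonerasing])
qed

lemma Omega_n_words_subset_legal:
  assumes "\<theta> > 1" and "primitive_subst S" and "good_approximant S \<omega>0"
    and "t + card (UNIV :: 'a set) ^ 2 \<le> n" and "real r < 2 * Cc * \<theta> ^ t"
  shows "words_of_len (conf_words (Omega_n S n \<omega>0)) r \<subseteq> words_of_len (legal_words S) r"
proof
  let ?k = "card (UNIV :: 'a set)"
  fix u assume "u \<in> words_of_len (conf_words (Omega_n S n \<omega>0)) r"
  then have "u \<in> conf_words (orbit_closure (subst_conf (subst_pow S n) \<omega>0))" and r: "length u = r"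
    by (auto simp: words_of_len_def Omega_n_eq[OF nonerasing])
  then obtain i where u: "u = window (subst_conf (subst_pow S n) \<omega>0) i r"
    by (metis conf_words_orbit_closure_window)
  have "?k \<le> ?k ^ 2"
    by (simp add: power2_eq_square)
  then have "r \<le> length (subst_pow S n x)" for x
    using length_subst_pow_lower_2[OF assms(1), of t n x] assms(4,5) by simp
  then obtain k where k: "sublist u (subst_pow S n (\<omega>0 k) @ subst_pow S n (\<omega>0 (k + 1)))"
    unfolding u by (rule window_sublist_two_blocks[OF nonerasing_subst_pow[OF nonerasing]])
  have "u \<in> legal_words S"
    using boundary_blocks_sublist_legal[OF assms(1-4) _ k] r assms(5) by simp
  with r show "u \<in> words_of_len (legal_words S) r"
    by (simp add: words_of_len_def)
qed

end

section \<open>Solving the logarithmic bounds\<close>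

lemma power_lower_bound_of_ln:
  fixes \<theta> a b y :: real
  assumes "\<theta> > 1" "a > 0" "b > 0" "y \<ge> 0"
    and "ln y / ln \<theta> + (ln b - ln a) / ln \<theta> \<le> real n"
  shows "b * y \<le> a * \<theta> ^ n"
proof (cases "y = 0")
  case False
  with assms(4) have "y > 0" by simp
  have "(ln y + (ln b - ln a)) / ln \<theta> \<le> real n"
    using assms(5) by (simp add: add_divide_distrib)
  then have "ln y + (ln b - ln a) \<le> real n * ln \<theta>"
    using assms(1) by (simp add: pos_divide_le_eq)
  then have "ln (b * y / a) \<le> ln (\<theta> ^ n)"
    using \<open>y > 0\<close> assms(1-3) by (simp add: ln_mult ln_div ln_realpow)
  then have "b * y / a \<le> \<theta> ^ n"
    using \<open>y > 0\<close> assms(1-3) by simp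
  with assms(2) show ?thesis by (simp add: field_simps)
qed (use assms in simp)

lemma power_upper_bound_of_ln:
  fixes \<theta> a y :: real
  assumes "\<theta> > 1" "0 < a" "a \<le> y"
    and "ln y / ln \<theta> - ln a / ln \<theta> + real K < real n"
  shows "K < n \<and> y < a * \<theta> ^ (n - K)"
proof -
  have "(ln y - ln a) / ln \<theta> < real n - real K"
    using assms(4) by (simp add: diff_divide_distrib)
  then have lt: "ln (y / a) < (real n - real K) * ln \<theta>"
    using assms(1-3) by (simp add: pos_divide_less_eq ln_div)
  moreover have "0 \<le> ln (y / a)"
    using assms(2,3) by simp
  ultimately have "K < n"
    using assms(1) by (smt (verit) of_nat_less_iff mult_nonpos_nonneg ln_gt_zero)
  with lt have "ln (y / a) < ln (\<theta> ^ (n - K))"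
    using assms(1) by (simp add: ln_realpow of_nat_diff)
  then have "y / a < \<theta> ^ (n - K)"
    using assms by simp
  with \<open>K < n\<close> assms(2) show ?thesis by (simp add: field_simps)
qed

section \<open>The degenerate case \<open>\<theta> = 1\<close>\<close>

context subst_growth
begin

text \<open>A letter with a longer image would, by primitivity, occur in every \<open>\<sigma>\<^sup>p(x)\<close>, so the
  lengths would grow at least linearly, contradicting \<open>|\<sigma>\<^sup>n(a)| \<le> \<hat>C\<close>.\<close>
lemma length_subst_eq_1_if_theta_eq_1:
  assumes "\<theta> = 1" and "primitive_subst S"
  shows "length (S a) = 1"
proof (rule ccontr)
  assume "length (S a) \<noteq> 1"
  moreover have "length (S a) \<noteq> 0" using nonerasing by (simp add: nonerasing_def)
  ultimately have long: "2 \<le> length (S a)" by linarith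
  obtain p where p: "\<And>x b. b \<in> set (subst_pow S p x)"
    using assms(2) by (auto simp: primitive_subst_def subst_pow_def)
  have grow: "Suc (length w) \<le> length ((subst_word S ^^ Suc p) w)" if "w \<noteq> []" for w
  proof -
    obtain x v where w: "w = x # v" using \<open>w \<noteq> []\<close> by (cases w) auto
    have "a \<in> set ((subst_word S ^^ p) w)"
      using p[where x = x and b = a] w by (simp add: funpow_subst_word_Cons)
    then obtain u v' where uv: "(subst_word S ^^ p) w = u @ a # v'"
      by (meson split_list)
    then have "length ((subst_word S ^^ Suc p) w)
        = length (subst_word S u) + length (S a) + length (subst_word S v')"
      by simp
    moreover have "length w \<le> length u + 1 + length v'"
      using length_funpow_subst_word_ge[OF nonerasing, of w p] uv by simp
    ultimately show ?thesis
      using length_subst_word_ge[OF nonerasing, of u] length_subst_word_ge[OF nonerasing, of v'] long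
      by linarith
  qed
  have linear: "Suc l \<le> length (subst_pow S (l * Suc p) a)" for l
  proof (induction l)
    case (Suc l)
    have "subst_pow S (Suc l * Suc p) a = (subst_word S ^^ Suc p) (subst_pow S (l * Suc p) a)"
      by (simp only: mult_Suc subst_pow_add)
    moreover have "subst_pow S (l * Suc p) a \<noteq> []"
      using length_subst_pow_pos[of "l * Suc p" a] by auto
    ultimately show ?case using grow Suc by (metis Suc_le_mono le_trans)
  qed simp
  define l where "l = nat \<lceil>Ch\<rceil>"
  have "Ch < real (Suc l)" unfolding l_def by linarith
  also have "\<dots> \<le> real (length (subst_pow S (l * Suc p) a))" using linear[of l] by linarith
  also have "\<dots> \<le> Ch" using length_subst_pow_upper[of "l * Suc p" a] assms(1) by simp
  finally show False by simp
qed

lemma length_subst_pow_eq_1_if_theta_eq_1: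
  assumes "\<theta> = 1" and "primitive_subst S"
  shows "length (subst_pow S n a) = 1"
proof -
  have "length (subst_word S w) = length w" for w
    by (induction w) (auto simp: length_subst_eq_1_if_theta_eq_1[OF assms])
  then show ?thesis by (induction n) (simp_all add: subst_pow_Suc)
qed

lemma singleton_alphabet_if_theta_eq_1:
  assumes "\<theta> = 1" and "primitive_subst S"
  shows "(x :: 'a) = y"
proof -
  obtain p where p: "\<And>z b. b \<in> set (subst_pow S p z)"
    using assms(2) by (auto simp: primitive_subst_def subst_pow_def)
  obtain z where "subst_pow S p x = [z]"
    using length_subst_pow_eq_1_if_theta_eq_1[OF assms, of p x] by (cases "subst_pow S p x") auto
  then show ?thesis using p[where z = x and b = x] p[where z = x and b = y] by simp
qed

text \<open>Here \<open>S = id\<close> on a one-letter alphabet \<open>{z}\<close>, \<open>zz\<close> is illegal and \<open>zz \<rightarrow> zz\<close> is a loop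
  of \<open>G(S)\<close>.\<close>
lemma not_good_approximant_if_theta_eq_1:
  assumes "\<theta> = 1" and "primitive_subst S"
  shows "\<not> good_approximant S \<omega>0"
proof
  let ?z = "\<omega>0 0"
  have single: "\<And>x y :: 'a. x = y"
    by (rule singleton_alphabet_if_theta_eq_1[OF assms])
  have "[?z, ?z] \<notin> legal_words S"
  proof
    assume "[?z, ?z] \<in> legal_words S"
    then obtain n a where "sublist [?z, ?z] (subst_pow S n a)"
      by (auto simp: legal_words_def subst_pow_def)
    then show False
      using sublist_length_le length_subst_pow_eq_1_if_theta_eq_1[OF assms, of n a] by fastforce
  qed
  moreover have "S ?z = [?z]"
    using length_subst_eq_1_if_theta_eq_1[OF assms, of ?z] single by (cases "S ?z") auto
  ultimately have "G_path S [[?z, ?z], [?z, ?z]]"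
    by (auto simp: G_path_def G_edge_def less_Suc_eq)
  moreover assume "good_approximant S \<omega>0"
  ultimately show False
    using single unfolding good_approximant_def by (metis distinct_length_2_or_more list.sel(1))
qed

end

lemma conf_words_orbit_closure_singleton_alphabet:
  assumes "\<And>x y :: 'a. x = y"
  shows "words_of_len W r \<subseteq> words_of_len (conf_words (orbit_closure (X :: int \<Rightarrow> 'a))) r"
proof
  fix u assume "u \<in> words_of_len W r"
  then have "length u = r" by (simp add: words_of_len_def)
  moreover have "u = window X 0 r"
    by (rule nth_equalityI) (use assms \<open>length u = r\<close> in auto)
  ultimately show "u \<in> words_of_len (conf_words (orbit_closure X)) r"
    using window_in_conf_words_orbit_closure by (simp add: words_of_len_def)
qed

text \<open>For \<open>\<theta> = 1\<close> we have \<open>ln \<theta> = 0\<close>, so the thresholds degenerate; then the alphabet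
  is a single letter and the statement holds trivially.\<close>
theorem mainTheorem4:
  fixes S :: "'a::finite \<Rightarrow> 'a list"
    and \<theta> C_S Cc Ch :: real and r :: nat and \<omega>0 :: "int \<Rightarrow> 'a"
  assumes "nonerasing S"
    and "primitive_subst S"
    and "pf_eigenvalue S \<theta>"
    and "lin_rep_const S C_S"
    and "growth_consts S \<theta> Cc Ch"
  shows "(\<forall>n::nat. real n \<ge> ln (real r) / ln \<theta> + (ln C_S - ln Cc) / ln \<theta> \<longrightarrow>
            words_of_len (legal_words S) r \<subseteq> words_of_len (conf_words (Omega_n S n \<omega>0)) r)
       \<and> (good_approximant S \<omega>0 \<longrightarrow>
          (\<forall>n::nat. real n > ln (real r) / ln \<theta> - ln (2 * Cc) / ln \<theta> + real (card (UNIV :: 'a set) ^ 2) \<longrightarrow>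
            words_of_len (conf_words (Omega_n S n \<omega>0)) r \<subseteq> words_of_len (legal_words S) r))"
proof -
  interpret subst_growth S \<theta> Cc Ch
    using assms(1,5) by unfold_locales
  have C_S: "C_S \<ge> 1"
    using assms(4) by (simp add: lin_rep_const_def)
  show ?thesis
  proof (cases "\<theta> = 1")
    case True
    then show ?thesis
      using not_good_approximant_if_theta_eq_1 singleton_alphabet_if_theta_eq_1 assms(1,2)
        conf_words_orbit_closure_singleton_alphabet by (metis Omega_n_def)
  next
    case False
    with theta_ge_1 have \<theta>: "\<theta> > 1" by simp
    have "words_of_len (legal_words S) r \<subseteq> words_of_len (conf_words (Omega_n S n \<omega>0)) r"
      if "real n \<ge> ln (real r) / ln \<theta> + (ln C_S - ln Cc) / ln \<theta>" for n
      using legal_words_subset_Omega_n[OF assms(4)] power_lower_bound_of_ln[OF \<theta> Cc_pos _ _ that] C_S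
      by simp
    moreover have "words_of_len (conf_words (Omega_n S n \<omega>0)) r \<subseteq> words_of_len (legal_words S) r"
      if good: "good_approximant S \<omega>0" and n: "real n > ln (real r) / ln \<theta> - ln (2 * Cc) / ln \<theta>
        + real (card (UNIV :: 'a set) ^ 2)" for n
    proof (cases "r \<le> 1")
      case True
      then show ?thesis by (auto simp: words_of_len_def intro: legal_words_short)
    next
      case False
      then have "2 * Cc \<le> real r" using Cc_le_1 by simp
      with power_upper_bound_of_ln[OF \<theta> _ _ n] Cc_pos
      show ?thesis by (intro Omega_n_words_subset_legal[OF \<theta> assms(2) good]) auto
    qed
    ultimately show ?thesis by blast
  qed
qed

end
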